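(* Consider $\mathbb{R}$ as an SSD space with the bilinear form $\lfloor x,y\rfloor=xy$, so $q(x)=\frac12x^2$. For a nonempty set $A\subset\mathbb{R}$, one has $A=G_{\Phi_A}$ if and only if $A$ is closed and convex.
   Context: For nonempty $A\subset\mathbb{R}$, $\Phi_A(x)=\sup_{a\in A}\{xa-\frac12a^2\}$. For a proper convex $f:\mathbb{R}\to\mathbb{R}\cup\{+\infty\}$, $f^{@}(b)=\sup_{c\in\mathbb{R}}\{cb-f(c)\}$ and $G_f=\{b\in\mathbb{R}: f(b)+f^{@}(b)=b^2\}$. *)

theory Defs
  imports "HOL-Analysis.Analysis"
begin

definition PhiA :: "real set \<Rightarrow> real \<Rightarrow> ereal" where
  "PhiA A x = (SUP a\<in>A. ereal (x * a - a\<^sup>2 / 2))"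

definition fconj :: "(real \<Rightarrow> ereal) \<Rightarrow> real \<Rightarrow> ereal" where
  "fconj f b = (SUP c. ereal (c * b) - f c)"

definition Gset :: "(real \<Rightarrow> ereal) \<Rightarrow> real set" where
  "Gset f = {b. f b + fconj f b = ereal (b\<^sup>2)}"

end

theory Submission
  imports Defs
begin

text \<open>
  For nonempty \<open>A\<close> the function \<open>\<Phi>\<^sub>A\<close> is real valued and \<open>b \<in> G\<^sub>\<Phi>\<^sub>A\<close> means that
  \<open>c b - \<Phi>\<^sub>A(c) \<le> b\<^sup>2 - \<Phi>\<^sub>A(b)\<close> for all \<open>c\<close>. This holds on the closure of \<open>A\<close>.
  If \<open>p \<in> A\<close> is the projection of \<open>b \<noteq> p\<close> onto \<open>A\<close>, i.e. \<open>(a - p)(b - p) \<le> 0\<close> on \<open>A\<close>,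
  then the reflection \<open>c = 2b - p\<close> violates the inequality, so \<open>G\<^sub>\<Phi>\<^sub>A \<subseteq> A\<close> for closed
  convex \<open>A\<close>. Conversely, if \<open>A\<close> is closed but has a gap \<open>]m - r, m + r[\<close> with both
  endpoints in \<open>A\<close>, the midpoint \<open>m\<close> lies in \<open>G\<^sub>\<Phi>\<^sub>A\<close> but not in \<open>A\<close>.
\<close>

definition phi :: "real set \<Rightarrow> real \<Rightarrow> real" where
  "phi A x = real_of_ereal (PhiA A x)"

lemma mult_diff_half_square_le: "x * a - a\<^sup>2 / 2 \<le> (x::real)\<^sup>2 / 2"
proof -
  have "0 \<le> (x - a)\<^sup>2" by simp
  thus ?thesis by (simp add: power2_eq_square algebra_simps)
qed

lemma PhiA_eq_phi:
  assumes "A \<noteq> {}"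
  shows "PhiA A x = ereal (phi A x)"
proof -
  obtain a0 where a0: "a0 \<in> A" using assms by blast
  have "ereal (x * a0 - a0\<^sup>2 / 2) \<le> PhiA A x"
    unfolding PhiA_def using a0 by (rule SUP_upper)
  moreover have "PhiA A x \<le> ereal (x\<^sup>2 / 2)"
    unfolding PhiA_def by (rule SUP_least) (metis ereal_less_eq(3) mult_diff_half_square_le)
  ultimately have "\<bar>PhiA A x\<bar> \<noteq> \<infinity>" by auto
  thus ?thesis unfolding phi_def by (simp add: ereal_real)
qed

lemma phi_ge:
  assumes "a \<in> A"
  shows "x * a - a\<^sup>2 / 2 \<le> phi A x"
proof -
  have "ereal (x * a - a\<^sup>2 / 2) \<le> PhiA A x"
    unfolding PhiA_def using assms by (rule SUP_upper)
  thus ?thesis using PhiA_eq_phi[of A x] assms by (metis empty_iff ereal_less_eq(3))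
qed

lemma phi_le:
  assumes "A \<noteq> {}" "\<And>a. a \<in> A \<Longrightarrow> x * a - a\<^sup>2 / 2 \<le> M"
  shows "phi A x \<le> M"
proof -
  have "PhiA A x \<le> ereal M"
    unfolding PhiA_def by (rule SUP_least) (simp add: assms(2))
  thus ?thesis using PhiA_eq_phi[OF assms(1), of x] by auto
qed

lemma Gset_PhiA_iff:
  assumes "A \<noteq> {}"
  shows "b \<in> Gset (PhiA A) \<longleftrightarrow> (\<forall>c. c * b - phi A c \<le> b\<^sup>2 - phi A b)"
proof -
  define S where "S = (SUP c. ereal (c * b - phi A c))"
  have conj: "fconj (PhiA A) b = S"
    unfolding fconj_def S_def PhiA_eq_phi[OF assms] by simp
  have S_ge: "ereal (b\<^sup>2 - phi A b) \<le> S"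
    unfolding S_def by (rule SUP_upper2[of b]) (auto simp: power2_eq_square)
  have "S \<le> ereal (b\<^sup>2 - phi A b) \<longleftrightarrow> (\<forall>c. c * b - phi A c \<le> b\<^sup>2 - phi A b)"
    unfolding S_def SUP_le_iff by simp
  moreover have "ereal (phi A b) + S = ereal (b\<^sup>2) \<longleftrightarrow> S = ereal (b\<^sup>2 - phi A b)"
    by (cases S) (auto simp: algebra_simps)
  ultimately show ?thesis
    using S_ge unfolding Gset_def mem_Collect_eq conj PhiA_eq_phi[OF assms] by auto
qed

lemma closure_subset_Gset_PhiA:
  assumes "A \<noteq> {}"
  shows "closure A \<subseteq> Gset (PhiA A)"
proof
  fix b assume b: "b \<in> closure A"
  have "c * b - phi A c \<le> b\<^sup>2 - phi A b" for c
  proof -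
    have "closure A \<subseteq> {a. c * a - a\<^sup>2 / 2 \<le> phi A c}"
      by (rule closure_minimal) (auto simp: phi_ge intro!: closed_Collect_le continuous_intros)
    hence "c * b - b\<^sup>2 / 2 \<le> phi A c" using b by blast
    moreover have "phi A b \<le> b\<^sup>2 / 2"
      by (rule phi_le[OF assms]) (rule mult_diff_half_square_le)
    ultimately show ?thesis by linarith
  qed
  thus "b \<in> Gset (PhiA A)" using Gset_PhiA_iff[OF assms] by blast
qed

lemma projection_notin_Gset_PhiA:
  assumes "p \<in> A" "b \<noteq> p" and proj: "\<And>a. a \<in> A \<Longrightarrow> (a - p) * (b - p) \<le> 0"
  shows "b \<notin> Gset (PhiA A)"
proof
  assume "b \<in> Gset (PhiA A)"
  define c where "c = 2 * b - p"
  have G: "c * b - phi A c \<le> b\<^sup>2 - phi A b"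
    using \<open>b \<in> Gset (PhiA A)\<close> Gset_PhiA_iff assms(1) by blast
  have "phi A c \<le> c * p - p\<^sup>2 / 2"
  proof (rule phi_le)
    fix a assume "a \<in> A"
    have "(c * a - a\<^sup>2 / 2) - (c * p - p\<^sup>2 / 2) = 2 * ((a - p) * (b - p)) - (a - p)\<^sup>2 / 2"
      unfolding c_def by (simp add: power2_eq_square field_simps)
    also have "\<dots> \<le> 0" using proj[OF \<open>a \<in> A\<close>] zero_le_power2[of "a - p"] by linarith
    finally show "c * a - a\<^sup>2 / 2 \<le> c * p - p\<^sup>2 / 2" by simp
  qed (use assms(1) in blast)
  moreover have "b * p - p\<^sup>2 / 2 \<le> phi A b" using phi_ge[OF assms(1)] .
  moreover have "(c * b - (c * p - p\<^sup>2 / 2)) - (b\<^sup>2 - (b * p - p\<^sup>2 / 2)) = (b - p)\<^sup>2"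
    unfolding c_def by (simp add: power2_eq_square algebra_simps)
  moreover have "(b - p)\<^sup>2 > 0" using assms(2) by simp
  ultimately show False using G by linarith
qed

lemma Gset_PhiA_subset_closed_convex:
  assumes "A \<noteq> {}" "closed A" "convex A"
  shows "Gset (PhiA A) \<subseteq> A"
proof
  fix b assume b: "b \<in> Gset (PhiA A)"
  show "b \<in> A"
  proof (rule ccontr)
    assume "b \<notin> A"
    define p where "p = closest_point A b"
    have "p \<in> A" unfolding p_def using assms closest_point_in_set by blast
    have "(b - p) * (a - p) \<le> 0" if "a \<in> A" for a
      using any_closest_point_dot[OF assms(3,2) \<open>p \<in> A\<close> that] closest_point_le[OF assms(2)]
      unfolding p_def by simp
    hence "b \<notin> Gset (PhiA A)"
      using projection_notin_Gset_PhiA[OF \<open>p \<in> A\<close>] \<open>b \<notin> A\<close> \<open>p \<in> A\<close> by (metis mult.commute)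
    thus False using b by blast
  qed
qed

lemma gap_midpoint_in_Gset_PhiA:
  assumes "0 \<le> r" "m - r \<in> A" "m + r \<in> A" and gap: "\<And>a. a \<in> A \<Longrightarrow> r \<le> \<bar>a - m\<bar>"
  shows "m \<in> Gset (PhiA A)"
proof -
  have ne: "A \<noteq> {}" using assms(2) by blast
  have phi_m: "phi A m \<le> m\<^sup>2 / 2 - r\<^sup>2 / 2"
  proof (rule phi_le[OF ne])
    fix a assume "a \<in> A"
    have "r\<^sup>2 \<le> (a - m)\<^sup>2"
      using gap[OF \<open>a \<in> A\<close>] assms(1) by (metis power2_abs power_mono)
    thus "m * a - a\<^sup>2 / 2 \<le> m\<^sup>2 / 2 - r\<^sup>2 / 2"
      by (simp add: power2_eq_square algebra_simps)
  qed
  have "c * m - phi A c \<le> m\<^sup>2 - phi A m" for c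
  proof -
    obtain s where s: "s = 1 \<or> s = -1" "s * (c - m) \<le> 0"
      by (cases "c \<le> m") (auto intro: that[of 1] that[of "-1"])
    have "m - s * r \<in> A" using s(1) assms(2,3) by auto
    hence "c * (m - s * r) - (m - s * r)\<^sup>2 / 2 \<le> phi A c" by (rule phi_ge)
    moreover have "c * m - (c * (m - s * r) - (m - s * r)\<^sup>2 / 2)
        = m\<^sup>2 / 2 + s\<^sup>2 * r\<^sup>2 / 2 + r * (s * (c - m))"
      by (simp add: power2_eq_square field_simps)
    moreover have "s\<^sup>2 * r\<^sup>2 = r\<^sup>2" using s(1) by auto
    moreover have "r * (s * (c - m)) \<le> 0" using assms(1) s(2) by (simp add: mult_nonneg_nonpos)
    ultimately show ?thesis using phi_m by linarith
  qed
  thus ?thesis using Gset_PhiA_iff[OF ne] by blast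
qed

lemma closed_gap_around_nonmember:
  fixes A :: "real set"
  assumes "closed A" "l0 \<in> A" "u0 \<in> A" "l0 \<le> x" "x \<le> u0" "x \<notin> A"
  obtains l u where "l \<in> A" "u \<in> A" "l < x" "x < u" "\<And>a. a \<in> A \<Longrightarrow> a \<le> l \<or> u \<le> a"
proof -
  define L where "L = A \<inter> {..x}"
  define U where "U = A \<inter> {x..}"
  have "closed L" "closed U" "L \<noteq> {}" "U \<noteq> {}" "bdd_above L" "bdd_below U"
    using assms unfolding L_def U_def by (auto intro: bdd_aboveI bdd_belowI)
  hence "Sup L \<in> L" "Inf U \<in> U"
    using closed_contains_Sup[of L] closed_contains_Inf[of U] by simp_all
  moreover have "a \<le> Sup L \<or> Inf U \<le> a" if "a \<in> A" for a
    using that cSup_upper[OF _ \<open>bdd_above L\<close>] cInf_lower[OF _ \<open>bdd_below U\<close>]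
    unfolding L_def U_def by (meson IntI atLeast_iff atMost_iff linear)
  moreover have "Sup L \<noteq> x" "Inf U \<noteq> x" using calculation(1,2) assms(6) unfolding L_def U_def by auto
  ultimately show ?thesis
    using that[of "Sup L" "Inf U"] unfolding L_def U_def by fastforce
qed

theorem mainTheorem20:
  fixes A :: "real set"
  assumes "A \<noteq> {}"
  shows "A = Gset (PhiA A) \<longleftrightarrow> closed A \<and> convex A"
proof
  assume A_eq: "A = Gset (PhiA A)"
  hence closed: "closed A"
    using closure_subset_Gset_PhiA[OF assms] closure_subset_eq by blast
  have "x \<in> A" if between: "a1 \<in> A" "a2 \<in> A" "a1 \<le> x" "x \<le> a2" for a1 a2 x
  proof (rule ccontr)
    assume "x \<notin> A"
    then obtain l u where lu: "l \<in> A" "u \<in> A" "l < x" "x < u"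
      and gap: "\<And>a. a \<in> A \<Longrightarrow> a \<le> l \<or> u \<le> a"
      using closed_gap_around_nonmember[OF closed between \<open>x \<notin> A\<close>] by blast
    define m where "m = (l + u) / 2"
    define r where "r = (u - l) / 2"
    have "m - r = l" "m + r = u" "0 \<le> r" "r \<le> \<bar>a - m\<bar> \<longleftrightarrow> a \<le> l \<or> u \<le> a" for a
      using lu unfolding m_def r_def by (auto simp: field_simps abs_if)
    hence "m \<in> A" using gap_midpoint_in_Gset_PhiA[of r m A] lu gap A_eq by simp
    thus False using gap[of m] lu unfolding m_def by (auto simp: field_simps)
  qed
  thus "closed A \<and> convex A" using closed is_interval_convex_1 is_interval_1 by blast
next
  assume "closed A \<and> convex A"
  thus "A = Gset (PhiA A)"
    using closure_subset_Gset_PhiA[OF assms] Gset_PhiA_subset_closed_convex[OF assms] closure_subset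
    by blast
qed

end
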